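(* The families $\mathrm{SLT}_1$ and $\mathrm{RL}_1^V$ are incomparable; in particular $\{a\}\in\mathrm{RL}_1^V\setminus\mathrm{SLT}_1$ and $\{a\}\{b\}^*\{a\}\cup\{a\}\in\mathrm{SLT}_1\setminus\mathrm{RL}_1^V$.
   Context: Strictly locally testable languages: let $V$ be an alphabet and $k\ge1$. For $B,I,E\subseteq V^k$ and $F\subseteq V^{\le k-1}$, $\mathrm{slt}(B,I,E,F)$ is the language over $V$ consisting of all words in $F$ together with all words $a_1\cdots a_n$ ($a_i\in V$, $n\ge k$) with $a_1\cdots a_k\in B$, $a_{j+1}\cdots a_{j+k}\in I$ for all $1\le j\le n-k-1$, and $a_{n-k+1}\cdots a_n\in E$. $\mathrm{SLT}_k$ is the family of languages of this form. A right-linear grammar is $G=(N,T,P,S)$ with rules $A\to wB$ or $A\to w$ ($A,B\in N$, $w\in T^*$). For a regular language $L$, $\mathrm{Var}_{RL}(L)$ is the minimum of $|N|$ over all right-linear grammars generating $L$; $\mathrm{RL}_n^V=\{L\text{ regular}:\mathrm{Var}_{RL}(L)\le n\}$. *)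

theory Defs
  imports Main
begin

definition words_len :: "'a set \<Rightarrow> nat \<Rightarrow> 'a list set" where
  "words_len V k = {w. length w = k \<and> set w \<subseteq> V}"

definition words_le :: "'a set \<Rightarrow> nat \<Rightarrow> 'a list set" where
  "words_le V k = {w. length w \<le> k \<and> set w \<subseteq> V}"

text \<open>slt(B,I,E,F) for window length k.  The interior factor
  a_{j+1}...a_{j+k} (1 <= j <= n-k-1) is take k (drop j w).\<close>
definition slt :: "nat \<Rightarrow> 'a list set \<Rightarrow> 'a list set \<Rightarrow> 'a list set \<Rightarrow> 'a list set \<Rightarrow> 'a list set" where
  "slt k B I E F = F \<union> {w. length w \<ge> k \<and> take k w \<in> B
      \<and> (\<forall>j. 1 \<le> j \<and> j + k + 1 \<le> length w \<longrightarrow> take k (drop j w) \<in> I)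
      \<and> drop (length w - k) w \<in> E}"

definition SLT :: "'a set \<Rightarrow> nat \<Rightarrow> 'a list set set" where
  "SLT V k = {L. \<exists>B I E F. B \<subseteq> words_len V k \<and> I \<subseteq> words_len V k \<and> E \<subseteq> words_len V k
      \<and> F \<subseteq> words_le V (k - 1) \<and> L = slt k B I E F}"

text \<open>Right-linear grammars: nonterminals are natural numbers; a rule (A, w, Some B)
  stands for A -> w B and (A, w, None) for A -> w.\<close>
type_synonym 'a rl_rule = "nat \<times> 'a list \<times> nat option"

inductive rl_derives :: "'a rl_rule set \<Rightarrow> nat \<Rightarrow> 'a list \<Rightarrow> bool" for P where
  term_rule: "(A, u, None) \<in> P \<Longrightarrow> rl_derives P A u"
| cont_rule: "(A, u, Some B) \<in> P \<Longrightarrow> rl_derives P B v \<Longrightarrow> rl_derives P A (u @ v)"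

definition rl_grammar :: "nat set \<Rightarrow> 'a set \<Rightarrow> 'a rl_rule set \<Rightarrow> nat \<Rightarrow> bool" where
  "rl_grammar N T P S \<longleftrightarrow> finite N \<and> finite P \<and> S \<in> N \<and>
     (\<forall>(A, w, X) \<in> P. A \<in> N \<and> set w \<subseteq> T \<and> (\<forall>B. X = Some B \<longrightarrow> B \<in> N))"

definition rl_lang :: "'a rl_rule set \<Rightarrow> nat \<Rightarrow> 'a list set" where
  "rl_lang P S = {w. rl_derives P S w}"

definition Var_RL :: "'a set \<Rightarrow> 'a list set \<Rightarrow> nat" where
  "Var_RL V L = (LEAST n. \<exists>N P S. rl_grammar N V P S \<and> card N = n \<and> rl_lang P S = L)"

definition regular :: "'a set \<Rightarrow> 'a list set \<Rightarrow> bool" where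
  "regular V L \<longleftrightarrow> L \<subseteq> lists V \<and> (\<exists>(Q :: nat set) q0 (\<delta> :: nat \<Rightarrow> 'a \<Rightarrow> nat) Fin.
     finite Q \<and> q0 \<in> Q \<and> Fin \<subseteq> Q \<and> (\<forall>q\<in>Q. \<forall>x\<in>V. \<delta> q x \<in> Q) \<and>
     L = {w. w \<in> lists V \<and> foldl \<delta> q0 w \<in> Fin})"

definition RL :: "'a set \<Rightarrow> nat \<Rightarrow> 'a list set set" where
  "RL V n = {L. regular V L \<and> Var_RL V L \<le> n}"

end

theory Submission
  imports Defs
begin

text \<open>A language of \<open>SLT\<^sub>1\<close> constrains only the first letter, the last letter and the
  interior letters of its words, so together with \<open>[a]\<close> it contains \<open>[a, a]\<close>; hence \<open>{[a]}\<close>,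
  which one nonterminal generates, is not in \<open>SLT\<^sub>1\<close>.  Conversely, a right-linear grammar
  with a single nonterminal \<open>S\<close> generates exactly the words \<open>u\<^sub>1 \<dots> u\<^sub>k v\<close> with loop rules
  \<open>S \<rightarrow> u\<^sub>i S\<close> and a terminal rule \<open>S \<rightarrow> v\<close>.  If its language is infinite, some loop word
  \<open>u\<close> is nonempty and every \<open>u\<^sup>k v\<close> is generated; but \<open>u u u v\<close> would contain three letters
  \<open>a\<close>, whereas the words of \<open>a b\<^sup>* a \<union> a\<close> contain at most two.\<close>

lemma set_butlast_tl_conv_nth:
  "set (butlast (tl w)) = {w ! j | j. 1 \<le> j \<and> j + 2 \<le> length w}"
proof -
  have nth: "butlast (tl w) ! i = w ! Suc i" if "i < length w - 2" for i
    using that by (simp add: nth_butlast nth_tl)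
  show ?thesis
  proof (intro equalityI subsetI)
    fix x assume "x \<in> set (butlast (tl w))"
    then obtain i where "i < length w - 2" "x = butlast (tl w) ! i"
      by (auto simp: in_set_conv_nth numeral_2_eq_2)
    then show "x \<in> {w ! j | j. 1 \<le> j \<and> j + 2 \<le> length w}"
      using nth by force
  next
    fix x assume "x \<in> {w ! j | j. 1 \<le> j \<and> j + 2 \<le> length w}"
    then obtain j where "1 \<le> j" "j + 2 \<le> length w" "x = w ! j" by blast
    then show "x \<in> set (butlast (tl w))"
      using nth[of "j - 1"] nth_mem[of "j - 1" "butlast (tl w)"] by simp
  qed
qed

lemma take_Suc0_drop: "i < length xs \<Longrightarrow> take (Suc 0) (drop i xs) = [xs ! i]"
  by (simp add: take_Suc_conv_app_nth)

lemma mem_slt1_iff: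
  "w \<in> slt 1 B I E F \<longleftrightarrow> w \<in> F \<or> (w \<noteq> [] \<and> [hd w] \<in> B
     \<and> (\<forall>x \<in> set (butlast (tl w)). [x] \<in> I) \<and> [last w] \<in> E)"
proof -
  have "take 1 w = [hd w]" "drop (length w - 1) w = [last w]" if "w \<noteq> []"
    using that take_Suc0_drop[of 0 w] take_Suc0_drop[of "length w - 1" w]
    by (auto simp: hd_conv_nth last_conv_nth)
  then show ?thesis
    unfolding slt_def set_butlast_tl_conv_nth by (auto simp: take_Suc0_drop Suc_le_eq)
qed

lemma SLT1_letter_imp_double_letter:
  assumes "L \<in> SLT V 1" "[a] \<in> L"
  shows "[a, a] \<in> L"
proof -
  obtain B I E F where F: "F \<subseteq> words_le V 0" and L: "L = slt 1 B I E F"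
    using assms(1) unfolding SLT_def by auto
  have "[a] \<notin> F" using F unfolding words_le_def by auto
  then have "[a] \<in> B" "[a] \<in> E" using assms(2) unfolding L mem_slt1_iff by auto
  then show ?thesis unfolding L mem_slt1_iff by simp
qed

lemma singleton_letter_notin_SLT1: "{[a]} \<notin> SLT V 1"
  using SLT1_letter_imp_double_letter[of "{[a]}" V a] by auto

lemma rl_derives_one_nonterminal:
  assumes "rl_derives P A w" and "\<forall>(A', u, X) \<in> P. A' = S \<and> (\<forall>B. X = Some B \<longrightarrow> B = S)"
  shows "\<exists>us v. (S, v, None) \<in> P \<and> (\<forall>u \<in> set us. (S, u, Some S) \<in> P) \<and> w = concat us @ v"
  using assms
proof (induction rule: rl_derives.induct)
  case (term_rule A u)
  then have "A = S" by fastforce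
  with term_rule show ?case by (intro exI[of _ "[]"] exI[of _ u]) auto
next
  case (cont_rule A u B v)
  then obtain us v' where "(S, v', None) \<in> P" "\<forall>u \<in> set us. (S, u, Some S) \<in> P" "v = concat us @ v'"
    by blast
  moreover from cont_rule have "A = S" "B = S" by fastforce+
  ultimately show ?case using cont_rule by (intro exI[of _ "u # us"] exI[of _ v']) auto
qed

lemma rl_derives_loop_power:
  assumes "(S, u, Some S) \<in> P" "rl_derives P S v"
  shows "rl_derives P S (concat (replicate k u) @ v)"
proof (induction k)
  case 0
  then show ?case using assms(2) by simp
next
  case (Suc k)
  from rl_derives.cont_rule[OF assms(1) this] show ?case by simp
qed

lemma one_nonterminal_pumping:
  assumes "rl_grammar N V P S" "card N \<le> 1" "infinite (rl_lang P S)"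
  obtains u v where "u \<noteq> []" "\<And>k. concat (replicate k u) @ v \<in> rl_lang P S"
proof -
  from assms(1) have "finite N" "S \<in> N" "finite P"
    and rules_in_N: "\<forall>(A, w, X) \<in> P. A \<in> N \<and> (\<forall>B. X = Some B \<longrightarrow> B \<in> N)"
    unfolding rl_grammar_def by auto
  with assms(2) have "N = {S}" using card_le_Suc0_iff_eq[of N] by auto
  with rules_in_N have rules: "\<forall>(A', u, X) \<in> P. A' = S \<and> (\<forall>B. X = Some B \<longrightarrow> B = S)"
    by fastforce
  have "{v. (S, v, None) \<in> P} \<subseteq> (\<lambda>(_, v, _). v) ` P" by force
  with \<open>finite P\<close> have "finite {v. (S, v, None) \<in> P}" using finite_surj by blast
  with assms(3) have "\<not> rl_lang P S \<subseteq> {v. (S, v, None) \<in> P}" using finite_subset by blast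
  then obtain w where w: "rl_derives P S w" "(S, w, None) \<notin> P" unfolding rl_lang_def by blast
  then obtain us v where v: "(S, v, None) \<in> P" and us: "\<forall>u \<in> set us. (S, u, Some S) \<in> P"
    and w_eq: "w = concat us @ v"
    using rl_derives_one_nonterminal[OF _ rules] by blast
  have "concat us \<noteq> []"
  proof
    assume "concat us = []"
    with w(2) v show False by (simp add: w_eq)
  qed
  then obtain u where "u \<in> set us" "u \<noteq> []" by auto
  show thesis
  proof
    show "u \<noteq> []" by fact
    show "concat (replicate k u) @ v \<in> rl_lang P S" for k
      using rl_derives_loop_power[OF _ rl_derives.term_rule[OF v]] us \<open>u \<in> set us\<close>
      unfolding rl_lang_def by blast
  qed
qed

lemma Var_RL_le_card:
  "rl_grammar N V P S \<Longrightarrow> rl_lang P S = L \<Longrightarrow> Var_RL V L \<le> card N"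
  unfolding Var_RL_def by (rule Least_le) blast

lemma Var_RL_attained:
  assumes "rl_grammar N V P S" "rl_lang P S = L"
  obtains N' P' S' where "rl_grammar N' V P' S'" "card N' = Var_RL V L" "rl_lang P' S' = L"
proof -
  have "\<exists>N P S. rl_grammar N V P S \<and> card N = Var_RL V L \<and> rl_lang P S = L"
    unfolding Var_RL_def by (rule LeastI_ex) (use assms in blast)
  then show thesis using that by blast
qed

lemma regular_singleton_letter:
  assumes "a \<in> V"
  shows "regular V {[a]}"
proof -
  define \<delta> where "\<delta> = (\<lambda>(q :: nat) x. if q = 0 \<and> x = a then 1 else 2 :: nat)"
  have sink: "foldl \<delta> 2 w = 2" for w by (induction w) (auto simp: \<delta>_def)
  have "w = [a]" if "foldl \<delta> 0 w = 1" for w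
  proof (cases w)
    case (Cons x w')
    with that sink show ?thesis by (cases w') (auto simp: \<delta>_def split: if_splits)
  qed (use that in simp)
  then have lang: "{[a]} = {w. w \<in> lists V \<and> foldl \<delta> 0 w \<in> {1}}"
    using assms by (auto simp: \<delta>_def)
  have closed: "\<forall>q \<in> {0, 1, 2}. \<forall>x \<in> V. \<delta> q x \<in> {0, 1, 2}" by (simp add: \<delta>_def)
  have "finite {0, 1, 2 :: nat}" "(0 :: nat) \<in> {0, 1, 2}" "{1 :: nat} \<subseteq> {0, 1, 2}" "{[a]} \<subseteq> lists V"
    using assms by auto
  with lang closed show ?thesis unfolding regular_def by blast
qed

lemma singleton_letter_in_RL1:
  assumes "a \<in> V"
  shows "{[a]} \<in> RL V 1"
proof -
  have "rl_derives {(0, [a], None)} 0 w \<longleftrightarrow> w = [a]" for w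
    by (auto elim: rl_derives.cases intro: rl_derives.term_rule)
  then have "rl_lang {(0, [a], None)} 0 = {[a]}" unfolding rl_lang_def by auto
  moreover have "rl_grammar {0} V {(0, [a], None)} 0" using assms unfolding rl_grammar_def by auto
  ultimately have "Var_RL V {[a]} \<le> 1" using Var_RL_le_card by fastforce
  with regular_singleton_letter[OF assms] show ?thesis unfolding RL_def by simp
qed

definition ab_star_a :: "'a \<Rightarrow> 'a \<Rightarrow> 'a list set" where
  "ab_star_a a b = {[a] @ w @ [a] | w. set w \<subseteq> {b}} \<union> {[a]}"

lemma ab_star_a_eq: "ab_star_a a b = insert [a] (range (\<lambda>n. a # replicate n b @ [a]))"
proof -
  have "set w \<subseteq> {b} \<longleftrightarrow> (\<exists>n. w = replicate n b)" for w
  proof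
    assume "set w \<subseteq> {b}"
    then have "replicate (length w) b = w" by (intro replicate_length_same) auto
    then show "\<exists>n. w = replicate n b" by metis
  qed auto
  then show ?thesis unfolding ab_star_a_def by auto
qed

lemma infinite_ab_star_a: "infinite (ab_star_a a b)"
proof -
  have "inj (\<lambda>n. a # replicate n b @ [a])" by (rule injI) simp
  then show ?thesis unfolding ab_star_a_eq using finite_imageD by auto
qed

lemma cube_notin_ab_star_a:
  assumes "a \<noteq> b" "u \<noteq> []"
  shows "u @ u @ u @ v \<notin> ab_star_a a b"
proof
  assume "u @ u @ u @ v \<in> ab_star_a a b"
  moreover have "u @ u @ u @ v \<noteq> [a]" using assms(2) by (cases u) auto
  ultimately obtain n where n: "u @ u @ u @ v = a # replicate n b @ [a]"
    unfolding ab_star_a_eq by auto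
  then have "hd u = a" using assms(2) by (cases u) auto
  then have "count_list (u @ u @ u @ v) a \<ge> 3"
    using assms(2) by (cases u) auto
  moreover have "count_list (a # replicate n b @ [a]) a = 2"
    using assms(1) by (induction n) auto
  ultimately show False using n by simp
qed

lemma ab_star_a_in_SLT1:
  assumes "a \<in> V" "b \<in> V"
  shows "ab_star_a a b \<in> SLT V 1"
proof -
  have "w \<in> ab_star_a a b \<longleftrightarrow> w \<in> slt 1 {[a]} {[b]} {[a]} {}" for w
  proof (cases w rule: rev_cases)
    case (snoc w' y)
    then show ?thesis unfolding ab_star_a_def mem_slt1_iff
      by (cases w') (auto simp: butlast_append)
  qed (unfold ab_star_a_def mem_slt1_iff, simp)
  then have "ab_star_a a b = slt 1 {[a]} {[b]} {[a]} {}" by blast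
  moreover have "{[a]} \<subseteq> words_len V 1" "{[b]} \<subseteq> words_len V 1"
    using assms unfolding words_len_def by auto
  ultimately show ?thesis unfolding SLT_def by blast
qed

lemma ab_star_a_grammar:
  assumes "a \<in> V" "b \<in> V"
  shows "\<exists>P. rl_grammar {0, 1} V P 0 \<and> rl_lang P 0 = ab_star_a a b"
proof -
  define P :: "'a rl_rule set" where
    "P = {(0, [a], None), (0, [a], Some 1), (1, [b], Some 1), (1, [a], None)}"
  have sound: "rl_derives P A w \<Longrightarrow> (A = 1 \<longrightarrow> (\<exists>n. w = replicate n b @ [a])) \<and>
      (A = 0 \<longrightarrow> w \<in> ab_star_a a b)" for A w
  proof (induction rule: rl_derives.induct)
    case (term_rule A u)
    then show ?case unfolding P_def ab_star_a_eq by (auto intro: exI[of _ 0])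
  next
    case (cont_rule A u B v)
    then have "A = 0 \<and> u = [a] \<or> A = 1 \<and> u = [b]" and "\<exists>n. v = replicate n b @ [a]"
      unfolding P_def by auto
    then show ?case unfolding ab_star_a_eq
      by (auto simp del: replicate_Suc simp: replicate_Suc[symmetric])
  qed
  have tail: "rl_derives P 1 (replicate n b @ [a])" for n
  proof (induction n)
    case 0 then show ?case unfolding P_def by (auto intro: rl_derives.term_rule)
  next
    case (Suc n)
    have "(1, [b], Some 1) \<in> P" unfolding P_def by simp
    from rl_derives.cont_rule[OF this Suc] show ?case by simp
  qed
  have "(0, [a], None) \<in> P" "(0, [a], Some 1) \<in> P" unfolding P_def by auto
  then have "rl_lang P 0 = ab_star_a a b"
    using sound[of 0] tail rl_derives.term_rule rl_derives.cont_rule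
    unfolding rl_lang_def ab_star_a_eq by fastforce
  moreover have "rl_grammar {0, 1} V P 0" using assms unfolding rl_grammar_def P_def by auto
  ultimately show ?thesis by blast
qed

lemma ab_star_a_notin_RL1:
  assumes "a \<in> V" "b \<in> V" "a \<noteq> b"
  shows "ab_star_a a b \<notin> RL V 1"
proof
  assume "ab_star_a a b \<in> RL V 1"
  then have "Var_RL V (ab_star_a a b) \<le> 1" unfolding RL_def by simp
  \<comment> \<open>\<open>Var_RL\<close> is a \<open>LEAST\<close>, so it is attained only once some grammar generates the language.\<close>
  moreover obtain P where "rl_grammar {0, 1} V P 0" "rl_lang P 0 = ab_star_a a b"
    using ab_star_a_grammar[OF assms(1,2)] by blast
  ultimately obtain N P' S where "rl_grammar N V P' S" "card N \<le> 1" "rl_lang P' S = ab_star_a a b"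
    using Var_RL_attained by metis
  then obtain u v where "u \<noteq> []" "concat (replicate 3 u) @ v \<in> ab_star_a a b"
    using one_nonterminal_pumping infinite_ab_star_a by metis
  then show False using cube_notin_ab_star_a[OF assms(3)] by (simp add: numeral_3_eq_3)
qed

theorem mainTheorem12:
  fixes V :: "'a set" and a b :: 'a
  assumes "finite V" and "a \<in> V" and "b \<in> V" and "a \<noteq> b"
  shows "\<not> SLT V 1 \<subseteq> RL V 1 \<and> \<not> RL V 1 \<subseteq> SLT V 1
     \<and> {[a]} \<in> RL V 1 - SLT V 1
     \<and> {[a] @ w @ [a] | w. set w \<subseteq> {b}} \<union> {[a]} \<in> SLT V 1 - RL V 1"
proof -
  have "{[a]} \<in> RL V 1 - SLT V 1"
    using singleton_letter_in_RL1[OF assms(2)] singleton_letter_notin_SLT1[of a V] by blast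
  moreover have "ab_star_a a b \<in> SLT V 1 - RL V 1"
    using ab_star_a_in_SLT1[OF assms(2,3)] ab_star_a_notin_RL1[OF assms(2-4)] by blast
  ultimately show ?thesis unfolding ab_star_a_def by blast
qed

end
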